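(* Let $\mathcal D_2(\lambda)$ be the distribution defined in the context, with $\lambda\in(0,\min(\alpha,\beta/(3d)))$. Then $\mathcal D_2(\lambda)$ is a $(\gamma,V)$-stable distribution for $V:=\mathbf X_1\setminus\{X_a\}$ and for every $\gamma>0$ with $\gamma\le\beta-3d\lambda$.
   Context: Entropies use the natural logarithm; $k$ is a fixed positive integer. For a finite set of discrete random variables $\mathbf Y$, a family is $\langle Y,\Pi\rangle$ with $Y\in\mathbf Y$, $\Pi\subseteq\mathbf Y\setminus\{Y\}$, $|\Pi|\le k$, $H(\langle Y,\Pi\rangle)=H(Y\mid\Pi)$; DAGs over $\mathbf Y$ with in-degree at most $k$ are identified with their sets of families, and a set $F$ of families has score $\mathcal S(F)=-\sum_{f\in F}H(f)$. Markov-equivalent DAGs (same conditional independence constraints) form equivalence classes (ECs) with a common score; an optimal EC maximizes the score. Construction. $\mathcal D_1$ is a distribution over a finite set $\mathbf X_1$ of at least $k$ discrete variables, containing a variable $X_a$, such that for some $\alpha,\beta>0$: (I) among DAGs over $\mathbf X_1$ with in-degree $\le k$, $\mathcal D_1$ has a unique optimal EC and the score difference between it and the next-best EC is at least $\beta$; (II) $X_a$ has no children in any structure of the optimal EC; (III) $H(X_a\mid\mathbf X_1\setminus\{X_a\})=\alpha$. Let $\mathbf X=\mathbf X_1\cup\{X_b\}$, $d=|\mathbf X|$. For $\lambda\in(0,\min(\alpha,\beta/(3d)))$, $\mathcal D_2(\lambda)$ is a distribution on $\mathbf X$ whose marginal on $\mathbf X_1$ is $\mathcal D_1$ and: (IV)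 there is a hidden Bernoulli variable $C$ independent of $\mathbf X_1$ with $P[X_b=X_a\mid C=1]=1$ and $X_b$ independent of $\mathbf X_1$ given $C=0$; (V) $P(C=1)$ is such that $\max(H(X_b\mid X_a),H(X_a\mid X_b))=\lambda$. $(\gamma,V)$-stable: with $\mathcal G_{d,k}$ the DAGs over $\mathbf X$ with in-degree $\le k$ and $\mathcal S^*=\max_{G\in\mathcal G_{d,k}}\mathcal S(G)$, for $\gamma>0$ and $V\subseteq\mathbf X$ a distribution is $(\gamma,V)$-stable if (1) in every $G\in\mathcal G_{d,k}$ with $\mathcal S(G)\ge\mathcal S^*-\gamma$ all parents of every variable in $V$ are in $V$; (2) for the marginal on $V$ (over DAGs on $V$ with in-degree $\le k$) there is a unique optimal EC and the score gap between the best and second-best EC is more than $\gamma$. *)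

theory Defs
  imports "HOL-Probability.Probability"
begin

text \<open>A joint distribution is a pmf
on full assignments 'v => 'a; only the coordinates of the variables under consideration
matter (all quantities are computed through marginals).\<close>

definition proj :: "'v set \<Rightarrow> ('v \<Rightarrow> 'a) \<Rightarrow> ('v \<Rightarrow> 'a)" where
  "proj S \<omega> = (\<lambda>v. if v \<in> S then \<omega> v else undefined)"

definition marg :: "('v \<Rightarrow> 'a) pmf \<Rightarrow> 'v set \<Rightarrow> ('v \<Rightarrow> 'a) pmf" where
  "marg P S = map_pmf (proj S) P"

definition ent :: "('v \<Rightarrow> 'a) pmf \<Rightarrow> 'v set \<Rightarrow> real" where
  "ent P S = - (\<Sum>x\<in>set_pmf (marg P S). pmf (marg P S) x * ln (pmf (marg P S) x))"

definition cond_ent :: "('v \<Rightarrow> 'a) pmf \<Rightarrow> 'v \<Rightarrow> 'v set \<Rightarrow> real" where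
  "cond_ent P Y Pa = ent P (insert Y Pa) - ent P Pa"

text \<open>A DAG over V is given by its parent map G (G v = parent set of v); the family set is
{<v, G v> | v in V}. Parent sets outside V are normalised to be empty.\<close>

definition edges :: "'v set \<Rightarrow> ('v \<Rightarrow> 'v set) \<Rightarrow> ('v \<times> 'v) set" where
  "edges V G = {(u, w). w \<in> V \<and> u \<in> G w}"

definition is_dag :: "nat \<Rightarrow> 'v set \<Rightarrow> ('v \<Rightarrow> 'v set) \<Rightarrow> bool" where
  "is_dag k V G \<longleftrightarrow>
     (\<forall>v\<in>V. G v \<subseteq> V - {v} \<and> card (G v) \<le> k) \<and>
     (\<forall>v. v \<notin> V \<longrightarrow> G v = {}) \<and>
     acyclic (edges V G)"

definition score :: "('v \<Rightarrow> 'a) pmf \<Rightarrow> 'v set \<Rightarrow> ('v \<Rightarrow> 'v set) \<Rightarrow> real" where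
  "score P V G = - (\<Sum>v\<in>V. cond_ent P v (G v))"

definition desc :: "'v set \<Rightarrow> ('v \<Rightarrow> 'v set) \<Rightarrow> 'v \<Rightarrow> 'v set" where
  "desc V G v = {w. (v, w) \<in> (edges V G)\<^sup>*}"

definition adj :: "'v set \<Rightarrow> ('v \<Rightarrow> 'v set) \<Rightarrow> 'v \<Rightarrow> 'v \<Rightarrow> bool" where
  "adj V G u w \<longleftrightarrow> (u, w) \<in> edges V G \<or> (w, u) \<in> edges V G"

definition active_trail :: "'v set \<Rightarrow> ('v \<Rightarrow> 'v set) \<Rightarrow> 'v set \<Rightarrow> 'v list \<Rightarrow> bool" where
  "active_trail V G Z p \<longleftrightarrow>
     length p \<ge> 2 \<and> distinct p \<and> set p \<subseteq> V \<and>
     (\<forall>i. Suc i < length p \<longrightarrow> adj V G (p ! i) (p ! Suc i)) \<and>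
     (\<forall>i. 0 < i \<and> Suc i < length p \<longrightarrow>
        (if (p ! (i - 1), p ! i) \<in> edges V G \<and> (p ! Suc i, p ! i) \<in> edges V G
         then desc V G (p ! i) \<inter> Z \<noteq> {}
         else p ! i \<notin> Z))"

definition dsep :: "'v set \<Rightarrow> ('v \<Rightarrow> 'v set) \<Rightarrow> 'v \<Rightarrow> 'v \<Rightarrow> 'v set \<Rightarrow> bool" where
  "dsep V G x y Z \<longleftrightarrow> \<not> (\<exists>p. active_trail V G Z p \<and> hd p = x \<and> last p = y)"

definition markov_equiv :: "'v set \<Rightarrow> ('v \<Rightarrow> 'v set) \<Rightarrow> ('v \<Rightarrow> 'v set) \<Rightarrow> bool" where
  "markov_equiv V G1 G2 \<longleftrightarrow>
     (\<forall>x\<in>V. \<forall>y\<in>V. \<forall>Z. x \<noteq> y \<and> Z \<subseteq> V - {x, y} \<longrightarrow>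
        (dsep V G1 x y Z \<longleftrightarrow> dsep V G2 x y Z))"

definition unique_opt_EC_gap_ge :: "nat \<Rightarrow> ('v \<Rightarrow> 'a) pmf \<Rightarrow> 'v set \<Rightarrow> ('v \<Rightarrow> 'v set) \<Rightarrow> real \<Rightarrow> bool" where
  "unique_opt_EC_gap_ge k P V G0 b \<longleftrightarrow>
     is_dag k V G0 \<and>
     (\<forall>G. is_dag k V G \<longrightarrow> score P V G \<le> score P V G0) \<and>
     (\<forall>G. is_dag k V G \<and> score P V G = score P V G0 \<longrightarrow> markov_equiv V G G0) \<and>
     (\<forall>G. is_dag k V G \<and> \<not> markov_equiv V G G0 \<longrightarrow> score P V G \<le> score P V G0 - b)"

definition unique_opt_EC_gap_gt :: "nat \<Rightarrow> ('v \<Rightarrow> 'a) pmf \<Rightarrow> 'v set \<Rightarrow> ('v \<Rightarrow> 'v set) \<Rightarrow> real \<Rightarrow> bool" where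
  "unique_opt_EC_gap_gt k P V G0 b \<longleftrightarrow>
     is_dag k V G0 \<and>
     (\<forall>G. is_dag k V G \<longrightarrow> score P V G \<le> score P V G0) \<and>
     (\<forall>G. is_dag k V G \<and> score P V G = score P V G0 \<longrightarrow> markov_equiv V G G0) \<and>
     (\<forall>G. is_dag k V G \<and> \<not> markov_equiv V G G0 \<longrightarrow> score P V G < score P V G0 - b)"

definition best_score :: "nat \<Rightarrow> ('v \<Rightarrow> 'a) pmf \<Rightarrow> 'v set \<Rightarrow> real" where
  "best_score k P X = Max (score P X ` {G. is_dag k X G})"

definition stable :: "nat \<Rightarrow> 'v set \<Rightarrow> ('v \<Rightarrow> 'a) pmf \<Rightarrow> real \<Rightarrow> 'v set \<Rightarrow> bool" where
  "stable k X P \<gamma> V \<longleftrightarrow>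
     (\<forall>G. is_dag k X G \<and> score P X G \<ge> best_score k P X - \<gamma> \<longrightarrow>
          (\<forall>v\<in>V. G v \<subseteq> V)) \<and>
     (\<exists>G0. unique_opt_EC_gap_gt k (marg P V) V G0 \<gamma>)"

end

theory Submission
  imports Defs
begin

(* Merging Xb into Xa turns a DAG over X1 + Xb into a DAG over X1: the children of Xb become
   children of Xa, and Xa takes over the parents of Xb when Xb is an ancestor of Xa. By
   submodularity of entropy each affected family loses at most
   lam = max (H(Xb|Xa)) (H(Xa|Xb)), so the merge costs at most |X1| lam. If a near-optimal
   DAG gave some vertex of V a parent in {Xa, Xb}, the merged DAG would give Xa a child, so it
   would lie outside the optimal EC of D1 and score at least beta below it; since attaching Xb
   as a child of Xa shows that the optimum over X drops by at most lam, this contradicts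
   gamma + (|X1| + 1) lam < beta. For the marginal on V, Xa is a sink of the optimal DAG, and
   re-attaching Xa with its optimal parents to any DAG over V shifts the score by a constant
   and reflects Markov equivalence, so the unique optimal EC and the gap beta > gamma carry over. *)

section \<open>Entropy of finite distributions\<close>

lemma proj_eq_iff: "proj S x = proj S y \<longleftrightarrow> (\<forall>v\<in>S. x v = y v)"
  by (auto simp: proj_def fun_eq_iff)

lemma proj_eq_subset: "proj T x = proj T y \<Longrightarrow> S \<subseteq> T \<Longrightarrow> proj S x = proj S y"
  by (auto simp: proj_eq_iff)

lemma proj_Un_eq_iff:
  "proj (S \<union> T) x = proj (S \<union> T) y \<longleftrightarrow> proj S x = proj S y \<and> proj T x = proj T y"
  by (auto simp: proj_eq_iff)

definition cyl_prob :: "('v \<Rightarrow> 'a) pmf \<Rightarrow> 'v set \<Rightarrow> ('v \<Rightarrow> 'a) \<Rightarrow> real" where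
  "cyl_prob P S w = measure_pmf.prob P {w'. proj S w' = proj S w}"

lemma pmf_marg_proj: "pmf (marg P S) (proj S w) = cyl_prob P S w"
  unfolding marg_def cyl_prob_def pmf_map by (simp add: vimage_def)

lemma cyl_prob_cong: "proj S w = proj S w' \<Longrightarrow> cyl_prob P S w = cyl_prob P S w'"
  unfolding cyl_prob_def by simp

lemma cyl_prob_nonneg: "0 \<le> cyl_prob P S w"
  unfolding cyl_prob_def by simp

lemma cyl_prob_ge_pmf: "pmf P w \<le> cyl_prob P S w"
  unfolding cyl_prob_def measure_pmf_single[symmetric]
  by (rule measure_pmf.finite_measure_mono) auto

lemma cyl_prob_pos: "w \<in> set_pmf P \<Longrightarrow> 0 < cyl_prob P S w"
  using cyl_prob_ge_pmf[of P w S] pmf_positive[of w P] by linarith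

lemma cyl_prob_antimono: "S \<subseteq> T \<Longrightarrow> cyl_prob P T w \<le> cyl_prob P S w"
  unfolding cyl_prob_def
  by (rule measure_pmf.finite_measure_mono) (auto intro: proj_eq_subset)

lemma cyl_prob_eq_sum:
  assumes "finite (set_pmf P)"
  shows "cyl_prob P S w = (\<Sum>w'\<in>set_pmf P. if proj S w' = proj S w then pmf P w' else 0)"
proof -
  have "cyl_prob P S w = measure_pmf.prob P (set_pmf P \<inter> {w'. proj S w' = proj S w})"
    unfolding cyl_prob_def by (metis measure_Int_set_pmf Int_commute)
  also have "\<dots> = sum (pmf P) (set_pmf P \<inter> {w'. proj S w' = proj S w})"
    using assms by (simp add: measure_measure_pmf_finite)
  finally show ?thesis
    using assms by (simp add: sum.inter_restrict)
qed

lemma ent_eq_sum_cyl_prob: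
  assumes fin: "finite (set_pmf P)"
  shows "ent P S = - (\<Sum>w\<in>set_pmf P. pmf P w * ln (cyl_prob P S w))"
proof -
  let ?W = "set_pmf P" and ?m = "pmf (marg P S)"
  have fibre: "(\<Sum>w\<in>{w\<in>?W. proj S w = x}. pmf P w) = ?m x" for x
  proof -
    have "?m x = measure_pmf.prob P (proj S -` {x} \<inter> ?W)"
      unfolding marg_def pmf_map measure_Int_set_pmf ..
    also have "proj S -` {x} \<inter> ?W = {w\<in>?W. proj S w = x}" by auto
    finally show ?thesis using fin by (simp add: measure_measure_pmf_finite)
  qed
  have "(\<Sum>w\<in>?W. pmf P w * ln (cyl_prob P S w)) =
      (\<Sum>x\<in>proj S ` ?W. \<Sum>w\<in>{w\<in>?W. proj S w = x}. pmf P w * ln (cyl_prob P S w))"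
    using fin by (rule sum.image_gen)
  also have "\<dots> = (\<Sum>x\<in>proj S ` ?W. \<Sum>w\<in>{w\<in>?W. proj S w = x}. pmf P w * ln (?m x))"
    by (intro sum.cong refl) (simp add: pmf_marg_proj[symmetric])
  also have "\<dots> = (\<Sum>x\<in>proj S ` ?W. ?m x * ln (?m x))"
    by (simp add: sum_distrib_right[symmetric] fibre)
  finally show ?thesis unfolding ent_def marg_def by simp
qed

lemma ent_mono:
  assumes fin: "finite (set_pmf P)" and "S \<subseteq> T"
  shows "ent P S \<le> ent P T"
proof -
  have "pmf P w * ln (cyl_prob P T w) \<le> pmf P w * ln (cyl_prob P S w)" if "w \<in> set_pmf P" for w
    using cyl_prob_antimono[OF \<open>S \<subseteq> T\<close>] cyl_prob_pos[OF that]
    by (intro mult_left_mono) auto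
  then show ?thesis
    unfolding ent_eq_sum_cyl_prob[OF fin] by (simp add: sum_mono)
qed

lemma sum_agreeing_ratio_le:
  assumes fin: "finite (set_pmf P)"
  shows "(\<Sum>w\<in>set_pmf P. if proj S w1 = proj S w \<and> proj T w2 = proj T w
            then pmf P w / (cyl_prob P (S \<union> T) w * cyl_prob P (S \<inter> T) w) else 0)
         \<le> (if proj (S \<inter> T) w1 = proj (S \<inter> T) w2 then 1 / cyl_prob P (S \<inter> T) w1 else 0)"
    (is "(\<Sum>w\<in>_. if ?agree w then _ else 0) \<le> _")
proof (cases "\<exists>w0\<in>set_pmf P. ?agree w0")
  case True
  then obtain w0 where w0: "w0 \<in> set_pmf P" "?agree w0" by blast
  have agree_iff: "?agree w \<longleftrightarrow> proj (S \<union> T) w = proj (S \<union> T) w0" for w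
    using w0 by (auto simp: proj_Un_eq_iff)
  have same_cyl: "cyl_prob P (S \<union> T) w * cyl_prob P (S \<inter> T) w
      = cyl_prob P (S \<union> T) w0 * cyl_prob P (S \<inter> T) w1" if "?agree w" for w
  proof -
    have "proj (S \<inter> T) w = proj (S \<inter> T) w1"
      using that proj_eq_subset[of S w1 w "S \<inter> T"] by auto
    then show ?thesis
      using that agree_iff cyl_prob_cong[of "S \<union> T" w w0 P] cyl_prob_cong[of "S \<inter> T" w w1 P] by simp
  qed
  have "(\<Sum>w\<in>set_pmf P. if ?agree w
        then pmf P w / (cyl_prob P (S \<union> T) w * cyl_prob P (S \<inter> T) w) else 0)
      = (\<Sum>w\<in>set_pmf P. if proj (S \<union> T) w = proj (S \<union> T) w0 then pmf P w else 0)
          / (cyl_prob P (S \<union> T) w0 * cyl_prob P (S \<inter> T) w1)"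
    unfolding sum_divide_distrib by (intro sum.cong refl) (simp add: same_cyl agree_iff)
  also have "\<dots> = 1 / cyl_prob P (S \<inter> T) w1"
    using cyl_prob_pos[OF w0(1), of "S \<union> T"] by (simp add: cyl_prob_eq_sum[OF fin, symmetric])
  moreover have "proj (S \<inter> T) w1 = proj (S \<inter> T) w2"
    using proj_eq_subset[of S w1 w0 "S \<inter> T"] proj_eq_subset[of T w2 w0 "S \<inter> T"] w0(2) by simp
  ultimately show ?thesis
    by simp
next
  case False
  then have "(\<Sum>w\<in>set_pmf P. if ?agree w
      then pmf P w / (cyl_prob P (S \<union> T) w * cyl_prob P (S \<inter> T) w) else 0) = 0"
    by (intro sum.neutral) auto
  then show ?thesis by (simp add: cyl_prob_nonneg)
qed

lemma sum_cyl_ratio_le_one: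
  assumes fin: "finite (set_pmf P)"
  shows "(\<Sum>w\<in>set_pmf P. pmf P w * (cyl_prob P S w * cyl_prob P T w
            / (cyl_prob P (S \<union> T) w * cyl_prob P (S \<inter> T) w))) \<le> 1"
proof -
  let ?W = "set_pmf P" and ?p = "pmf P" and ?I = "cyl_prob P (S \<inter> T)"
  let ?c = "\<lambda>w. ?p w / (cyl_prob P (S \<union> T) w * ?I w)"
  let ?agree = "\<lambda>w1 w2 w. proj S w1 = proj S w \<and> proj T w2 = proj T w"
  have expand: "?p w * (cyl_prob P S w * cyl_prob P T w / (cyl_prob P (S \<union> T) w * ?I w))
      = (\<Sum>w1\<in>?W. \<Sum>w2\<in>?W. ?p w1 * ?p w2 * (if ?agree w1 w2 w then ?c w else 0))" for w
  proof -
    have "cyl_prob P S w * cyl_prob P T w = (\<Sum>w1\<in>?W. \<Sum>w2\<in>?W.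
        (if proj S w1 = proj S w then ?p w1 else 0) * (if proj T w2 = proj T w then ?p w2 else 0))"
      unfolding cyl_prob_eq_sum[OF fin, of S w] cyl_prob_eq_sum[OF fin, of T w] sum_product ..
    then have "?p w * (cyl_prob P S w * cyl_prob P T w / (cyl_prob P (S \<union> T) w * ?I w))
        = (\<Sum>w1\<in>?W. \<Sum>w2\<in>?W.
          (if proj S w1 = proj S w then ?p w1 else 0) *
          (if proj T w2 = proj T w then ?p w2 else 0)) * ?c w"
      by simp
    also have "\<dots> = (\<Sum>w1\<in>?W. \<Sum>w2\<in>?W. ?p w1 * ?p w2 * (if ?agree w1 w2 w then ?c w else 0))"
      unfolding sum_distrib_right by (intro sum.cong refl) simp
    finally show ?thesis .
  qed
  have "(\<Sum>w\<in>?W. ?p w * (cyl_prob P S w * cyl_prob P T w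
            / (cyl_prob P (S \<union> T) w * ?I w)))
      = (\<Sum>w1\<in>?W. \<Sum>w2\<in>?W. ?p w1 * ?p w2 * (\<Sum>w\<in>?W. if ?agree w1 w2 w then ?c w else 0))"
    unfolding expand sum_distrib_left by (subst sum.swap, subst (2) sum.swap) (rule refl)
  also have "\<dots> \<le> (\<Sum>w1\<in>?W. \<Sum>w2\<in>?W.
      ?p w1 * ?p w2 * (if proj (S \<inter> T) w1 = proj (S \<inter> T) w2 then 1 / ?I w1 else 0))"
    by (intro sum_mono mult_left_mono sum_agreeing_ratio_le[OF fin]) auto
  also have "\<dots> = (\<Sum>w1\<in>?W. ?p w1 / ?I w1 * ?I w1)"
    unfolding cyl_prob_eq_sum[OF fin, of "S \<inter> T"] sum_distrib_left
    by (intro sum.cong refl) auto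
  also have "\<dots> = (\<Sum>w1\<in>?W. ?p w1)"
    by (intro sum.cong refl) (simp add: cyl_prob_pos less_imp_neq[symmetric])
  also have "\<dots> = 1"
    using fin by (simp add: sum_pmf_eq_1)
  finally show ?thesis .
qed

lemma ent_submodular:
  assumes fin: "finite (set_pmf P)"
  shows "ent P (S \<union> T) + ent P (S \<inter> T) \<le> ent P S + ent P T"
proof -
  let ?W = "set_pmf P" and ?p = "pmf P"
  let ?S = "cyl_prob P S" and ?T = "cyl_prob P T"
    and ?U = "cyl_prob P (S \<union> T)" and ?I = "cyl_prob P (S \<inter> T)"
  define r where "r w = ?S w * ?T w / (?U w * ?I w)" for w
  have ln_r: "?p w * ln (r w)
      = ?p w * ln (?S w) + ?p w * ln (?T w) - ?p w * ln (?U w) - ?p w * ln (?I w)"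
    if "w \<in> ?W" for w
  proof -
    have "ln (r w) = ln (?S w) + ln (?T w) - ln (?U w) - ln (?I w)"
      using cyl_prob_pos[OF that, of S] cyl_prob_pos[OF that, of T]
        cyl_prob_pos[OF that, of "S \<union> T"] cyl_prob_pos[OF that, of "S \<inter> T"]
      unfolding r_def by (simp add: ln_div ln_mult)
    then show ?thesis by (simp add: right_diff_distrib distrib_left)
  qed
  have "(\<Sum>w\<in>?W. ?p w * ln (r w)) = (\<Sum>w\<in>?W.
      ?p w * ln (?S w) + ?p w * ln (?T w) - ?p w * ln (?U w) - ?p w * ln (?I w))"
    by (rule sum.cong[OF refl ln_r])
  then have "ent P S + ent P T - ent P (S \<union> T) - ent P (S \<inter> T) = - (\<Sum>w\<in>?W. ?p w * ln (r w))"
    unfolding ent_eq_sum_cyl_prob[OF fin] by (simp add: sum.distrib sum_subtractf)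
  also have "\<dots> \<ge> - (\<Sum>w\<in>?W. ?p w * (r w - 1))"
    unfolding r_def
    by (intro le_imp_neg_le sum_mono mult_left_mono ln_le_minus_one)
      (auto intro!: divide_pos_pos mult_pos_pos cyl_prob_pos)
  also have "- (\<Sum>w\<in>?W. ?p w * (r w - 1)) = 1 - (\<Sum>w\<in>?W. ?p w * r w)"
    using fin by (simp add: algebra_simps sum_subtractf sum_pmf_eq_1)
  finally show ?thesis
    using sum_cyl_ratio_le_one[OF fin, of S T] unfolding r_def by linarith
qed

lemma cond_ent_nonneg: "finite (set_pmf P) \<Longrightarrow> 0 \<le> cond_ent P Y Pa"
  unfolding cond_ent_def using ent_mono[of P Pa "insert Y Pa"] by auto

lemma cond_ent_replace_parent:
  assumes fin: "finite (set_pmf P)" and "Y \<noteq> a" "a \<noteq> b" "b \<in> Pa"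
  shows "cond_ent P Y (insert a (Pa - {b})) \<le> cond_ent P Y Pa + cond_ent P b {a}"
proof -
  let ?h = "ent P" and ?B = "insert a (Pa - {b})"
  have "?h (insert Y ?B) \<le> ?h (insert Y (insert a Pa))"
    by (rule ent_mono[OF fin]) auto
  moreover have "?h (insert Y (insert a Pa)) + ?h Pa \<le> ?h (insert Y Pa) + ?h (insert a Pa)"
  proof -
    have "insert Y Pa \<union> insert a Pa = insert Y (insert a Pa)" "insert Y Pa \<inter> insert a Pa = Pa"
      using assms by auto
    with ent_submodular[OF fin, of "insert Y Pa" "insert a Pa"] show ?thesis
      by simp
  qed
  moreover have "?h (insert a Pa) + ?h {a} \<le> ?h {b, a} + ?h ?B"
  proof -
    have "{b, a} \<union> ?B = insert a Pa" "{b, a} \<inter> ?B = {a}"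
      using assms by auto
    with ent_submodular[OF fin, of "{b, a}" ?B] show ?thesis
      by simp
  qed
  ultimately show ?thesis
    unfolding cond_ent_def by linarith
qed

lemma cond_ent_swap:
  assumes fin: "finite (set_pmf P)" and "a \<noteq> b" "a \<notin> Pa"
  shows "cond_ent P a Pa \<le> cond_ent P b Pa + cond_ent P a {b}"
proof -
  let ?h = "ent P"
  have "?h (insert a Pa) \<le> ?h (insert a (insert b Pa))"
    by (rule ent_mono[OF fin]) auto
  moreover have "{a, b} \<union> insert b Pa = insert a (insert b Pa)" "{a, b} \<inter> insert b Pa = {b}"
    using assms by auto
  with ent_submodular[OF fin, of "{a, b}" "insert b Pa"]
  have "?h (insert a (insert b Pa)) + ?h {b} \<le> ?h {a, b} + ?h (insert b Pa)"
    by simp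
  ultimately show ?thesis
    unfolding cond_ent_def by linarith
qed

lemma marg_marg: "S \<subseteq> T \<Longrightarrow> marg (marg P T) S = marg P S"
  unfolding marg_def map_pmf_comp
  by (rule arg_cong[where f = "\<lambda>f. map_pmf f P"]) (auto simp: proj_def fun_eq_iff)

lemma ent_marg_cong:
  assumes "marg P T = marg Q T" and "S \<subseteq> T"
  shows "ent P S = ent Q S"
proof -
  have "marg P S = marg Q S"
    using marg_marg[OF assms(2), of P] marg_marg[OF assms(2), of Q] assms(1) by simp
  then show ?thesis unfolding ent_def by simp
qed

lemma cond_ent_marg_cong:
  assumes "marg P T = marg Q T" and "insert v S \<subseteq> T"
  shows "cond_ent P v S = cond_ent Q v S"
  unfolding cond_ent_def
  using ent_marg_cong[OF assms] ent_marg_cong[OF assms(1), of S] assms(2) by simp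

lemma score_marg_cong:
  assumes "marg P T = marg Q T" and "\<And>v. v \<in> V \<Longrightarrow> insert v (G v) \<subseteq> T"
  shows "score P V G = score Q V G"
  unfolding score_def
  by (intro arg_cong[where f = uminus] sum.cong refl cond_ent_marg_cong[OF assms(1) assms(2)])

section \<open>DAGs and sink extensions\<close>

lemma acyclic_if_edges_map_into_trancl:
  assumes "acyclic R" and "\<And>u w. (u, w) \<in> S \<Longrightarrow> (f u, f w) \<in> R\<^sup>+"
  shows "acyclic S"
proof -
  have "(f x, f y) \<in> R\<^sup>+" if "(x, y) \<in> S\<^sup>+" for x y
    using that
  proof induction
    case (base y)
    then show ?case using assms(2) by blast
  next
    case (step y z)
    then show ?case using assms(2) by (meson trancl_trans)
  qed
  then show ?thesis
    using assms(1) unfolding acyclic_def by blast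
qed

lemma rtrancl_Un_into_sink:
  assumes "\<And>u w. (u, w) \<in> F \<Longrightarrow> w = a" and "\<And>w. (a, w) \<notin> R \<union> F"
    and "(x, y) \<in> (R \<union> F)\<^sup>*"
  shows "y = a \<or> (x, y) \<in> R\<^sup>*"
  using assms(3)
proof induction
  case (step y z)
  then show ?case using assms(1,2) by (metis Un_iff rtrancl.rtrancl_into_rtrancl)
qed simp

lemma trancl_Un_into_sink:
  assumes "\<And>u w. (u, w) \<in> F \<Longrightarrow> w = a" and "\<And>w. (a, w) \<notin> R \<union> F"
    and "(x, y) \<in> (R \<union> F)\<^sup>+"
  shows "y = a \<or> (x, y) \<in> R\<^sup>+"
  using assms(3)
proof induction
  case (step y z)
  then show ?case using assms(1,2) by (metis Un_iff trancl.trancl_into_trancl)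
qed (use assms(1) in blast)

lemma finite_dags:
  assumes "finite X"
  shows "finite {G. is_dag k X G}"
proof -
  have "inj_on (\<lambda>G. restrict G X) {G. is_dag k X G}"
  proof (rule inj_onI)
    fix G H assume "G \<in> {G. is_dag k X G}" "H \<in> {G. is_dag k X G}" "restrict G X = restrict H X"
    then have "\<forall>v. v \<notin> X \<longrightarrow> G v = {} \<and> H v = {}" "\<forall>v\<in>X. G v = H v"
      unfolding is_dag_def by (auto simp: restrict_def fun_eq_iff split: if_splits)
    then show "G = H"
      by (metis ext)
  qed
  moreover have "(\<lambda>G. restrict G X) ` {G. is_dag k X G} \<subseteq> PiE X (\<lambda>_. Pow X)"
    by (auto simp: is_dag_def) blast
  moreover have "finite (PiE X (\<lambda>_. Pow X))"
    using assms by (intro finite_PiE) auto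
  ultimately show ?thesis
    by (meson finite_imageD finite_subset)
qed

lemma score_le_best_score: "finite X \<Longrightarrow> is_dag k X G \<Longrightarrow> score P X G \<le> best_score k P X"
  unfolding best_score_def using finite_dags by (intro Max_ge) auto

locale sink_extension =
  fixes V :: "'v set" and H :: "'v \<Rightarrow> 'v set" and a :: 'v and Pa :: "'v set"
  assumes parents_in: "\<And>v. v \<in> V \<Longrightarrow> H v \<subseteq> V"
    and parents_outside: "\<And>v. v \<notin> V \<Longrightarrow> H v = {}"
    and sink_notin: "a \<notin> V" and new_parents_in: "Pa \<subseteq> V"
begin

abbreviation "H' \<equiv> H(a := Pa)"
abbreviation "new_edges \<equiv> {(u, a) | u. u \<in> Pa}"

lemma edges_extension: "edges (insert a V) H' = edges V H \<union> new_edges"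
  unfolding edges_def using sink_notin parents_outside by auto

lemma no_edge_from_sink: "(a, w) \<notin> edges V H \<union> new_edges"
  unfolding edges_def using parents_in new_parents_in sink_notin by auto

lemma acyclic_extension:
  assumes "acyclic (edges V H)"
  shows "acyclic (edges (insert a V) H')"
  unfolding acyclic_def edges_extension
proof (intro allI notI)
  fix x assume cycle: "(x, x) \<in> (edges V H \<union> new_edges)\<^sup>+"
  show False
  proof (cases "x = a")
    case True
    then show False
      using tranclD[OF cycle] no_edge_from_sink by blast
  next
    case False
    then show False
      using trancl_Un_into_sink[OF _ no_edge_from_sink cycle] assms unfolding acyclic_def by blast
  qed
qed

lemma edge_extension_iff: "w \<noteq> a \<Longrightarrow> (u, w) \<in> edges (insert a V) H' \<longleftrightarrow> (u, w) \<in> edges V H"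
  unfolding edges_extension by auto

lemma adj_extension_iff: "u \<noteq> a \<Longrightarrow> w \<noteq> a \<Longrightarrow> adj (insert a V) H' u w \<longleftrightarrow> adj V H u w"
  unfolding adj_def using edge_extension_iff by blast

lemma desc_extension_inter:
  assumes "a \<notin> Z"
  shows "desc (insert a V) H' w \<inter> Z = desc V H w \<inter> Z"
proof (intro equalityI subsetI)
  fix z assume "z \<in> desc (insert a V) H' w \<inter> Z"
  then have "(w, z) \<in> (edges V H \<union> new_edges)\<^sup>*" "z \<in> Z"
    unfolding desc_def edges_extension by auto
  then show "z \<in> desc V H w \<inter> Z"
    using rtrancl_Un_into_sink[OF _ no_edge_from_sink] assms unfolding desc_def by blast
next
  fix z assume "z \<in> desc V H w \<inter> Z"
  then show "z \<in> desc (insert a V) H' w \<inter> Z"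
    unfolding desc_def edges_extension using rtrancl_mono[of "edges V H"] by blast
qed

lemma desc_sink: "desc (insert a V) H' a = {a}"
proof -
  have "z = a" if "(a, z) \<in> (edges V H \<union> new_edges)\<^sup>*" for z
    using that by (cases rule: converse_rtranclE) (use no_edge_from_sink in auto)
  then show ?thesis
    unfolding desc_def edges_extension by auto
qed

lemma active_trail_extension_iff:
  assumes "set p \<subseteq> V" and "a \<notin> Z"
  shows "active_trail (insert a V) H' Z p \<longleftrightarrow> active_trail V H Z p"
proof -
  have not_sink: "i < length p \<Longrightarrow> p ! i \<noteq> a" for i
    using assms(1) sink_notin nth_mem by blast
  have "adj (insert a V) H' (p ! i) (p ! Suc i) \<longleftrightarrow> adj V H (p ! i) (p ! Suc i)"
    if "Suc i < length p" for i
    using that adj_extension_iff not_sink by simp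
  moreover have "(p ! (i - 1), p ! i) \<in> edges (insert a V) H' \<longleftrightarrow> (p ! (i - 1), p ! i) \<in> edges V H"
    "(p ! Suc i, p ! i) \<in> edges (insert a V) H' \<longleftrightarrow> (p ! Suc i, p ! i) \<in> edges V H"
    if "Suc i < length p" for i
    using that edge_extension_iff not_sink by simp_all
  ultimately show ?thesis
    unfolding active_trail_def desc_extension_inter[OF assms(2)] using assms(1)
    by (intro conj_cong all_cong1 imp_cong refl) auto
qed

text \<open>The sink has no children, so inside a trail it is a collider whose only descendant is
  itself.\<close>
lemma active_trail_extension_avoids_sink:
  assumes trail: "active_trail (insert a V) H' Z p" and ends: "hd p \<in> V" "last p \<in> V"
    and "a \<notin> Z"
  shows "set p \<subseteq> V"
proof -
  have ne: "p \<noteq> []" using trail unfolding active_trail_def by auto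
  have "a \<notin> set p"
  proof
    assume "a \<in> set p"
    then obtain i where i: "i < length p" "p ! i = a" by (metis in_set_conv_nth)
    have "i \<noteq> 0" using i ends(1) ne sink_notin by (metis hd_conv_nth)
    moreover have "i \<noteq> length p - 1" using i ends(2) ne sink_notin by (metis last_conv_nth)
    ultimately have inner: "0 < i" "Suc i < length p" using i by auto
    have adjacent: "adj (insert a V) H' (p ! j) (p ! Suc j)" if "Suc j < length p" for j
      using trail that unfolding active_trail_def by blast
    have "adj (insert a V) H' (p ! (i - 1)) a" "adj (insert a V) H' a (p ! Suc i)"
      using adjacent[of "i - 1"] adjacent[of i] inner i by simp_all
    then have "(p ! (i - 1), p ! i) \<in> edges (insert a V) H'"
      "(p ! Suc i, p ! i) \<in> edges (insert a V) H'"
      using i no_edge_from_sink unfolding adj_def edges_extension by auto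
    moreover have "if (p ! (i - 1), p ! i) \<in> edges (insert a V) H' \<and>
          (p ! Suc i, p ! i) \<in> edges (insert a V) H'
        then desc (insert a V) H' (p ! i) \<inter> Z \<noteq> {} else p ! i \<notin> Z"
      using trail inner unfolding active_trail_def by blast
    ultimately have "desc (insert a V) H' a \<inter> Z \<noteq> {}"
      using i by simp
    then show False
      using desc_sink \<open>a \<notin> Z\<close> by simp
  qed
  then show ?thesis
    using trail unfolding active_trail_def by auto
qed

lemma dsep_extension_iff:
  assumes "x \<in> V" "y \<in> V" "Z \<subseteq> V"
  shows "dsep (insert a V) H' x y Z \<longleftrightarrow> dsep V H x y Z"
proof -
  have "a \<notin> Z" using assms(3) sink_notin by auto
  have "active_trail (insert a V) H' Z p \<longleftrightarrow> active_trail V H Z p" if "hd p = x" "last p = y" for p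
  proof
    assume "active_trail (insert a V) H' Z p"
    moreover from this have "set p \<subseteq> V"
      using active_trail_extension_avoids_sink \<open>a \<notin> Z\<close> assms that by blast
    ultimately show "active_trail V H Z p"
      using active_trail_extension_iff \<open>a \<notin> Z\<close> by blast
  next
    assume "active_trail V H Z p"
    moreover from this have "set p \<subseteq> V"
      unfolding active_trail_def by auto
    ultimately show "active_trail (insert a V) H' Z p"
      using active_trail_extension_iff \<open>a \<notin> Z\<close> by blast
  qed
  then show ?thesis
    unfolding dsep_def by blast
qed

lemma is_dag_extension:
  assumes "is_dag k V H" and "card Pa \<le> k"
  shows "is_dag k (insert a V) H'"
  using assms acyclic_extension sink_notin new_parents_in parents_outside
  unfolding is_dag_def by auto

lemma score_extension:
  assumes "finite V"
  shows "score P (insert a V) H' = score P V H - cond_ent P a Pa"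
proof -
  have "(\<Sum>v\<in>V. cond_ent P v (H' v)) = (\<Sum>v\<in>V. cond_ent P v (H v))"
    using sink_notin by (intro sum.cong) auto
  then show ?thesis
    unfolding score_def using assms sink_notin by simp
qed

end

lemma markov_equiv_refl: "markov_equiv V G G"
  unfolding markov_equiv_def by blast

lemma sink_extension_if_is_dag: "is_dag k V H \<Longrightarrow> a \<notin> V \<Longrightarrow> Pa \<subseteq> V \<Longrightarrow> sink_extension V H a Pa"
  unfolding is_dag_def by unfold_locales auto

lemma markov_equiv_if_sink_extensions_equiv:
  assumes "sink_extension V H a Pa" "sink_extension V H0 a Pa0"
    and "markov_equiv (insert a V) (H(a := Pa)) (H0(a := Pa0))"
  shows "markov_equiv V H H0"
  unfolding markov_equiv_def
proof (intro ballI allI impI)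
  fix x y Z assume xy: "x \<in> V" "y \<in> V" and Z: "x \<noteq> y \<and> Z \<subseteq> V - {x, y}"
  then have "dsep (insert a V) (H(a := Pa)) x y Z \<longleftrightarrow> dsep (insert a V) (H0(a := Pa0)) x y Z"
    using assms(3) unfolding markov_equiv_def by blast
  then show "dsep V H x y Z \<longleftrightarrow> dsep V H0 x y Z"
    using sink_extension.dsep_extension_iff[OF assms(1) xy]
      sink_extension.dsep_extension_iff[OF assms(2) xy] Z
    by auto
qed

section \<open>Merging one vertex into another\<close>

text \<open>Merging b into a: a takes over the parents of b exactly when b is an ancestor of a, which
  is what keeps the merged graph acyclic.\<close>
definition collapse :: "'v set \<Rightarrow> 'v \<Rightarrow> 'v \<Rightarrow> ('v \<Rightarrow> 'v set) \<Rightarrow> 'v \<Rightarrow> 'v set" where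
  "collapse X a b G u =
     (if u \<in> X - {a} then (if b \<in> G u then insert a (G u - {b}) else G u)
      else if u = a then (if (b, a) \<in> (edges (insert b X) G)\<^sup>* then G b else G a)
      else {})"

locale collapse_dag =
  fixes k :: nat and X :: "'v set" and a b :: 'v and G :: "'v \<Rightarrow> 'v set"
  assumes finite_X: "finite X" and a_in: "a \<in> X" and b_notin: "b \<notin> X"
    and dag: "is_dag k (insert b X) G"
begin

abbreviation "E \<equiv> edges (insert b X) G"
abbreviation "G' \<equiv> collapse X a b G"

lemma parents_bounded: "u \<in> insert b X \<Longrightarrow> G u \<subseteq> insert b X - {u} \<and> card (G u) \<le> k"
  using dag unfolding is_dag_def by blast

lemma edge_iff: "(u, w) \<in> E \<longleftrightarrow> w \<in> insert b X \<and> u \<in> G w"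
  unfolding edges_def by auto

lemma acyclic_E: "acyclic E"
  using dag unfolding is_dag_def by blast

lemma a_notin_parents_b: "(b, a) \<in> E\<^sup>* \<Longrightarrow> a \<notin> G b"
  using acyclic_E edge_iff unfolding acyclic_def by (meson insertI1 rtrancl_into_trancl2)

lemma b_notin_parents_a: "(b, a) \<notin> E\<^sup>* \<Longrightarrow> b \<notin> G a"
  using edge_iff a_in by blast

lemma parents_collapse_bounded:
  assumes "u \<in> X"
  shows "G' u \<subseteq> X - {u} \<and> card (G' u) \<le> k"
proof (cases "u = a")
  case True
  then show ?thesis
    using parents_bounded[of b] parents_bounded[of a] a_in a_notin_parents_b b_notin_parents_a
    unfolding collapse_def by auto
next
  case False
  have "finite (G u)"
    using parents_bounded[of u] assms finite_X
    by (meson finite_Diff finite_insert finite_subset insertI2)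
  then have "card (insert a (G u - {b})) \<le> card (G u)" if "b \<in> G u"
  proof -
    have "card (insert a (G u - {b})) \<le> Suc (card (G u - {b}))"
      using \<open>finite (G u)\<close> by (simp add: card_insert_if)
    also have "\<dots> = card (G u)"
      using card_Suc_Diff1[OF \<open>finite (G u)\<close> that] .
    finally show ?thesis .
  qed
  then show ?thesis
    using parents_bounded[of u] assms False a_in unfolding collapse_def by auto
qed

lemma acyclic_collapse_if_not_ancestor:
  assumes "(b, a) \<notin> E\<^sup>*"
  shows "acyclic (edges X G')"
proof (rule acyclic_if_edges_map_into_trancl[where f = id])
  show "acyclic (insert (a, b) E)"
    using acyclic_E assms by simp
  fix u w assume "(u, w) \<in> edges X G'"
  then have w: "w \<in> X" and u: "u \<in> G' w"
    unfolding edges_def by auto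
  show "(id u, id w) \<in> (insert (a, b) E)\<^sup>+"
  proof (cases "w = a")
    case True
    then have "u \<in> G a"
      using u assms unfolding collapse_def by simp
    then show ?thesis
      using edge_iff a_in True by auto
  next
    case False
    show ?thesis
    proof (cases "u = a \<and> b \<in> G w")
      case True
      then have "(a, b) \<in> insert (a, b) E" "(b, w) \<in> insert (a, b) E"
        using edge_iff w by auto
      then have "(a, w) \<in> (insert (a, b) E)\<^sup>+"
        by (meson r_into_trancl trancl_into_trancl)
      then show ?thesis
        using True by simp
    next
      case False
      then have "u \<in> G w"
        using u w \<open>w \<noteq> a\<close> unfolding collapse_def by (auto split: if_splits)
      then show ?thesis
        using edge_iff w by auto
    qed
  qed
qed

lemma acyclic_collapse_if_ancestor:
  assumes reach: "(b, a) \<in> E\<^sup>*"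
  shows "acyclic (edges X G')"
proof (rule acyclic_if_edges_map_into_trancl[OF acyclic_E, where f = "id(a := b)"])
  fix u w assume "(u, w) \<in> edges X G'"
  then have w: "w \<in> X" and u: "u \<in> G' w"
    unfolding edges_def by auto
  show "((id(a := b)) u, (id(a := b)) w) \<in> E\<^sup>+"
  proof (cases "w = a")
    case True
    then have "u \<in> G b"
      using u reach unfolding collapse_def by simp
    moreover from this have "u \<noteq> a"
      using a_notin_parents_b reach by auto
    ultimately show ?thesis
      using True edge_iff by auto
  next
    case False
    have "(b, w) \<in> E\<^sup>+" if "u = a"
    proof (cases "b \<in> G w")
      case True
      then show ?thesis
        using edge_iff w by auto
    next
      case False
      then have "(a, w) \<in> E"
        using u \<open>u = a\<close> w \<open>w \<noteq> a\<close> edge_iff unfolding collapse_def by simp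
      then show ?thesis
        by (rule rtrancl_into_trancl1[OF reach])
    qed
    moreover have "(u, w) \<in> E" if "u \<noteq> a"
      using u that w \<open>w \<noteq> a\<close> edge_iff unfolding collapse_def by (auto split: if_splits)
    ultimately show ?thesis
      using False by (cases "u = a") auto
  qed
qed

lemma is_dag_collapse: "is_dag k X G'"
  using parents_collapse_bounded acyclic_collapse_if_ancestor acyclic_collapse_if_not_ancestor a_in
  unfolding is_dag_def by (auto simp: collapse_def)

lemma a_parent_in_collapse:
  assumes "v \<in> X - {a}" and "\<not> G v \<subseteq> X - {a}"
  shows "a \<in> G' v"
  using assms parents_bounded[of v] unfolding collapse_def by auto

lemma score_collapse_ge:
  assumes fin: "finite (set_pmf P)"
    and b_given_a: "cond_ent P b {a} \<le> lam" and a_given_b: "cond_ent P a {b} \<le> lam"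
  shows "score P (insert b X) G \<le> score P X G' + real (card X) * lam"
proof -
  let ?V = "X - {a}"
  have "a \<noteq> b" using a_in b_notin by auto
  have "0 \<le> lam" using cond_ent_nonneg[OF fin] b_given_a by (rule order_trans)
  have parents_V: "cond_ent P u (G' u) \<le> cond_ent P u (G u) + lam" if "u \<in> ?V" for u
  proof (cases "b \<in> G u")
    case True
    then have "cond_ent P u (G' u) \<le> cond_ent P u (G u) + cond_ent P b {a}"
      using cond_ent_replace_parent[OF fin _ \<open>a \<noteq> b\<close> True, of u] that
      unfolding collapse_def by simp
    then show ?thesis using b_given_a by simp
  qed (use that \<open>0 \<le> lam\<close> in \<open>simp add: collapse_def\<close>)
  have parent_a: "cond_ent P a (G' a) \<le> cond_ent P b (G b) + cond_ent P a (G a) + lam"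
  proof (cases "(b, a) \<in> E\<^sup>*")
    case True
    then have "cond_ent P a (G' a) \<le> cond_ent P b (G b) + cond_ent P a {b}"
      using cond_ent_swap[OF fin \<open>a \<noteq> b\<close> a_notin_parents_b[OF True]] a_in
      unfolding collapse_def by simp
    then show ?thesis
      using a_given_b cond_ent_nonneg[OF fin, of a "G a"] by simp
  next
    case False
    then show ?thesis
      using a_in \<open>0 \<le> lam\<close> cond_ent_nonneg[OF fin, of b "G b"] unfolding collapse_def by simp
  qed
  have "(\<Sum>u\<in>?V. cond_ent P u (G' u)) \<le> (\<Sum>u\<in>?V. cond_ent P u (G u) + lam)"
    using parents_V by (rule sum_mono)
  also have "\<dots> = (\<Sum>u\<in>?V. cond_ent P u (G u)) + real (card ?V) * lam"
    by (simp add: sum.distrib)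
  finally have sum_V: "(\<Sum>u\<in>?V. cond_ent P u (G' u))
      \<le> (\<Sum>u\<in>?V. cond_ent P u (G u)) + real (card ?V) * lam" .
  have "score P (insert b X) G
      = - (cond_ent P b (G b) + cond_ent P a (G a) + (\<Sum>u\<in>?V. cond_ent P u (G u)))"
    unfolding score_def
    using finite_X b_notin sum.remove[OF finite_X a_in, of "\<lambda>u. cond_ent P u (G u)"] by simp
  moreover have "score P X G' = - (cond_ent P a (G' a) + (\<Sum>u\<in>?V. cond_ent P u (G' u)))"
    unfolding score_def using sum.remove[OF finite_X a_in, of "\<lambda>u. cond_ent P u (G' u)"] by simp
  moreover have "real (card X) * lam = real (card ?V) * lam + lam"
    by (simp add: card_Suc_Diff1[OF finite_X a_in, symmetric] distrib_right)
  ultimately show ?thesis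
    using parent_a sum_V by linarith
qed

end

section \<open>Stability of the extended distribution\<close>

lemma unique_opt_EC_gap_ge_marg_cong:
  assumes "marg P X = marg Q X"
  shows "unique_opt_EC_gap_ge k P X G b \<longleftrightarrow> unique_opt_EC_gap_ge k Q X G b"
proof -
  have "score P X H = score Q X H" if "is_dag k X H" for H
    using that by (intro score_marg_cong[OF assms]) (auto simp: is_dag_def)
  then show ?thesis
    unfolding unique_opt_EC_gap_ge_def by (simp cong: conj_cong)
qed

lemma unique_opt_EC_gap_gt_if_ge:
  "unique_opt_EC_gap_ge k P X G b \<Longrightarrow> \<gamma> < b \<Longrightarrow> unique_opt_EC_gap_gt k P X G \<gamma>"
  unfolding unique_opt_EC_gap_ge_def unique_opt_EC_gap_gt_def by fastforce

lemma best_score_insert_ge: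
  assumes "finite X" "is_dag k X G" "a \<in> X" "b \<notin> X" "0 < k"
  shows "score P X G - cond_ent P b {a} \<le> best_score k P (insert b X)"
proof -
  interpret sink_extension X G b "{a}"
    using sink_extension_if_is_dag[OF assms(2,4)] assms(3) by simp
  have "is_dag k (insert b X) (G(b := {a}))"
    using is_dag_extension[OF assms(2)] assms(5) by simp
  then have "score P (insert b X) (G(b := {a})) \<le> best_score k P (insert b X)"
    using assms(1) by (intro score_le_best_score) simp_all
  then show ?thesis
    unfolding score_extension[OF assms(1)] .
qed

lemma parents_closed_if_near_optimal:
  assumes fin_P: "finite (set_pmf P)" and fin_X: "finite X" and a_in: "a \<in> X"
    and b_notin: "b \<notin> X" and k_pos: "0 < k"
    and opt: "unique_opt_EC_gap_ge k P X G1 \<beta>"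
    and a_childless: "\<forall>G. is_dag k X G \<and> markov_equiv X G G1 \<longrightarrow> (\<forall>v\<in>X. a \<notin> G v)"
    and b_given_a: "cond_ent P b {a} \<le> lam" and a_given_b: "cond_ent P a {b} \<le> lam"
    and gap: "\<gamma> + (real (card X) + 1) * lam < \<beta>"
    and G: "is_dag k (insert b X) G"
    and near: "best_score k P (insert b X) - \<gamma> \<le> score P (insert b X) G"
    and v: "v \<in> X - {a}"
  shows "G v \<subseteq> X - {a}"
proof (rule ccontr)
  assume "\<not> G v \<subseteq> X - {a}"
  interpret collapse_dag k X a b G
    using fin_X a_in b_notin G by unfold_locales
  have "\<not> markov_equiv X G' G1"
    using a_childless is_dag_collapse a_parent_in_collapse[OF v \<open>\<not> G v \<subseteq> X - {a}\<close>] v by blast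
  then have "score P X G' \<le> score P X G1 - \<beta>"
    using opt is_dag_collapse unfolding unique_opt_EC_gap_ge_def by blast
  moreover have "score P X G1 - lam \<le> best_score k P (insert b X)"
    using best_score_insert_ge[OF fin_X _ a_in b_notin k_pos, of G1 P] opt b_given_a
    unfolding unique_opt_EC_gap_ge_def by linarith
  moreover have "score P (insert b X) G \<le> score P X G' + real (card X) * lam"
    by (rule score_collapse_ge[OF fin_P b_given_a a_given_b])
  moreover have "(real (card X) + 1) * lam = real (card X) * lam + lam"
    by (simp add: distrib_right)
  ultimately show False
    using near gap by linarith
qed

lemma unique_opt_EC_marg_remove_sink:
  assumes fin_X: "finite X" and a_in: "a \<in> X"
    and opt: "unique_opt_EC_gap_ge k P X G1 \<beta>" and a_childless: "\<forall>v\<in>X. a \<notin> G1 v"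
  shows "unique_opt_EC_gap_ge k (marg P (X - {a})) (X - {a}) (G1(a := {})) \<beta>"
proof -
  let ?V = "X - {a}" and ?G0 = "G1(a := {})"
  have X_eq: "insert a ?V = X" and G1_eq: "?G0(a := G1 a) = G1"
    using a_in by auto
  have G1_dag: "is_dag k X G1"
    and G1_max: "\<And>G. is_dag k X G \<Longrightarrow> score P X G \<le> score P X G1"
    and G1_unique: "\<And>G. is_dag k X G \<Longrightarrow> score P X G = score P X G1 \<Longrightarrow> markov_equiv X G G1"
    and G1_gap: "\<And>G. is_dag k X G \<Longrightarrow> \<not> markov_equiv X G G1 \<Longrightarrow> score P X G \<le> score P X G1 - \<beta>"
    using opt unfolding unique_opt_EC_gap_ge_def by blast+
  have G1_a: "G1 a \<subseteq> ?V" "card (G1 a) \<le> k"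
    using G1_dag a_in unfolding is_dag_def by auto
  have G0_dag: "is_dag k ?V ?G0"
    unfolding is_dag_def
  proof (intro conjI ballI allI impI)
    show "?G0 v \<subseteq> ?V - {v}" "card (?G0 v) \<le> k" if "v \<in> ?V" for v
      using that G1_dag a_childless unfolding is_dag_def by auto
    show "?G0 v = {}" if "v \<notin> ?V" for v
      using that G1_dag unfolding is_dag_def by auto
    have "edges ?V ?G0 \<subseteq> edges X G1"
      unfolding edges_def by auto
    then show "acyclic (edges ?V ?G0)"
      using G1_dag acyclic_subset unfolding is_dag_def by blast
  qed
  have extend: "is_dag k X (G(a := G1 a)) \<and> sink_extension ?V G a (G1 a) \<and>
      score P X (G(a := G1 a)) = score (marg P ?V) ?V G - cond_ent P a (G1 a)"
    if G: "is_dag k ?V G" for G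
  proof -
    interpret sink_extension ?V G a "G1 a"
      using sink_extension_if_is_dag[OF G] G1_a by blast
    have "score (marg P ?V) ?V G = score P ?V G"
      using G marg_marg[of ?V ?V P] by (intro score_marg_cong) (auto simp: is_dag_def)
    then show ?thesis
      using is_dag_extension[OF G G1_a(2)] score_extension[of P] fin_X sink_extension_axioms
      unfolding X_eq by simp
  qed
  have G1_score: "score P X G1 = score (marg P ?V) ?V ?G0 - cond_ent P a (G1 a)"
    using extend[OF G0_dag] unfolding G1_eq by blast
  have equiv: "markov_equiv ?V G ?G0"
    if "is_dag k ?V G" and "markov_equiv X (G(a := G1 a)) G1" for G
    using markov_equiv_if_sink_extensions_equiv[of ?V G a "G1 a" ?G0 "G1 a"] extend[OF that(1)]
      extend[OF G0_dag] that(2) unfolding X_eq G1_eq by blast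
  show ?thesis
    unfolding unique_opt_EC_gap_ge_def
  proof (intro conjI allI impI)
    fix G assume G: "is_dag k ?V G"
    then show "score (marg P ?V) ?V G \<le> score (marg P ?V) ?V ?G0"
      using G1_max[of "G(a := G1 a)"] extend[OF G] G1_score by linarith
  next
    fix G assume G: "is_dag k ?V G \<and> score (marg P ?V) ?V G = score (marg P ?V) ?V ?G0"
    then have "markov_equiv X (G(a := G1 a)) G1"
      using G1_unique[of "G(a := G1 a)"] extend[of G] G1_score by simp
    then show "markov_equiv ?V G ?G0"
      using equiv G by blast
  next
    fix G assume G: "is_dag k ?V G \<and> \<not> markov_equiv ?V G ?G0"
    then have "\<not> markov_equiv X (G(a := G1 a)) G1"
      using equiv by blast
    then show "score (marg P ?V) ?V G \<le> score (marg P ?V) ?V ?G0 - \<beta>"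
      using G1_gap[of "G(a := G1 a)"] extend[of G] G G1_score by simp
  qed (rule G0_dag)
qed

theorem theorem4:
  fixes k :: nat
    and X1 :: "'v set" and Xa Xb :: 'v
    and D1 D2 :: "('v \<Rightarrow> 'a) pmf"
    and \<alpha> \<beta> lam \<gamma> :: real
  assumes k_pos: "0 < k"
    and fin_X1: "finite X1" and card_X1: "card X1 \<ge> k"
    and Xa_in: "Xa \<in> X1" and Xb_notin: "Xb \<notin> X1"
    and fin_D1: "finite (set_pmf D1)"
    and \<alpha>_pos: "0 < \<alpha>" and \<beta>_pos: "0 < \<beta>"
    and I: "\<exists>G1. unique_opt_EC_gap_ge k D1 X1 G1 \<beta> \<and>
              (\<forall>G. is_dag k X1 G \<and> markov_equiv X1 G G1 \<longrightarrow> (\<forall>v\<in>X1. Xa \<notin> G v))"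
    and III: "cond_ent D1 Xa (X1 - {Xa}) = \<alpha>"
    and lam_pos: "0 < lam" and lam_lt_\<alpha>: "lam < \<alpha>"
    and lam_lt_\<beta>: "lam < \<beta> / (3 * real (card (insert Xb X1)))"
    and fin_D2: "finite (set_pmf D2)"
    and marg_D2: "marg D2 X1 = marg D1 X1"
    and IV: "\<exists>Q :: (bool \<times> ('v \<Rightarrow> 'a)) pmf.
              map_pmf snd Q = D2 \<and>
              (\<forall>x1. measure_pmf.prob Q {(c, \<omega>). c \<and> proj X1 \<omega> = x1}
                     = measure_pmf.prob Q {(c, \<omega>). c} * measure_pmf.prob Q {(c, \<omega>). proj X1 \<omega> = x1}) \<and>
              (\<forall>(c, \<omega>)\<in>set_pmf Q. c \<longrightarrow> \<omega> Xb = \<omega> Xa) \<and>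
              (\<forall>x1 b. measure_pmf.prob Q {(c, \<omega>). \<not> c \<and> proj X1 \<omega> = x1 \<and> \<omega> Xb = b}
                       * measure_pmf.prob Q {(c, \<omega>). \<not> c}
                     = measure_pmf.prob Q {(c, \<omega>). \<not> c \<and> proj X1 \<omega> = x1}
                       * measure_pmf.prob Q {(c, \<omega>). \<not> c \<and> \<omega> Xb = b})"
    and V: "max (cond_ent D2 Xb {Xa}) (cond_ent D2 Xa {Xb}) = lam"
    and \<gamma>_pos: "0 < \<gamma>"
    and \<gamma>_le: "\<gamma> \<le> \<beta> - 3 * real (card (insert Xb X1)) * lam"
  shows "stable k (insert Xb X1) D2 \<gamma> (X1 - {Xa})"
proof -
  obtain G1 where opt1: "unique_opt_EC_gap_ge k D1 X1 G1 \<beta>"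
    and Xa_childless: "\<forall>G. is_dag k X1 G \<and> markov_equiv X1 G G1 \<longrightarrow> (\<forall>v\<in>X1. Xa \<notin> G v)"
    using I by blast
  have opt: "unique_opt_EC_gap_ge k D2 X1 G1 \<beta>"
    using opt1 unique_opt_EC_gap_ge_marg_cong[OF marg_D2] by blast
  have "is_dag k X1 G1"
    using opt unfolding unique_opt_EC_gap_ge_def by blast
  then have "\<forall>v\<in>X1. Xa \<notin> G1 v"
    using Xa_childless markov_equiv_refl by blast
  have lam_bounds: "cond_ent D2 Xb {Xa} \<le> lam" "cond_ent D2 Xa {Xb} \<le> lam"
    using V max.cobounded1 max.cobounded2 by metis+
  have "0 < (real (card X1) + 1) * lam"
    using lam_pos by simp
  moreover have "\<gamma> \<le> \<beta> - 3 * ((real (card X1) + 1) * lam)"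
    using \<gamma>_le fin_X1 Xb_notin by (simp add: algebra_simps)
  ultimately have gap: "\<gamma> + (real (card X1) + 1) * lam < \<beta>" and "\<gamma> < \<beta>"
    by linarith+
  show ?thesis
    unfolding stable_def
    using parents_closed_if_near_optimal[OF fin_D2 fin_X1 Xa_in Xb_notin k_pos opt Xa_childless
        lam_bounds gap]
      unique_opt_EC_gap_gt_if_ge[OF unique_opt_EC_marg_remove_sink[OF fin_X1 Xa_in opt
          \<open>\<forall>v\<in>X1. Xa \<notin> G1 v\<close>] \<open>\<gamma> < \<beta>\<close>]
    by blast
qed

end
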